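(* Let $h(w)=\sum_{s\in\mathcal S}\pi_s\,\frac{\phi_s^\top w-V_s}{\|\phi_s\|_2^2}\,\phi_s$ be the function tracked asymptotically by the Normalized Monte Carlo update $w_{k+1}=w_k-\alpha_k TP_k(w_k)$. Then the unique globally asymptotically stable equilibrium of the limiting ODE $\dot w(t)=-h(w(t))$ is $w^M=\big[(\Phi^\top NDN\Phi)^{-1}\Phi^\top NDN\big]V$.
   Context: $\mathcal S=\{1,\dots,m\}$ is the state space of an ergodic Markov chain with stationary distribution $\pi$, $D=\mathrm{diag}(\pi)$; $V\in\mathbb R^m$ is the value function; $\phi_s\in\mathbb R^n$ are nonzero features and $\Phi\in\mathbb R^{m\times n}$ (rows $\phi_s^\top$) has full column rank; $N$ is diagonal with $N_{(s,s)}=1/\|\phi_s\|_2$. $TP_k$ is the sampled normalized update $\frac1\tau\sum_{i=1}^\tau\frac{\phi_i^\top w-\widetilde V_i}{\|\phi_i\|^2}\phi_i$ over the distinct states of a sampled trajectory, whose conditional expectation is $h$. *)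

theory Defs
  imports "HOL-Analysis.Analysis"
begin

definition stochastic :: "('s::finite \<Rightarrow> 's \<Rightarrow> real) \<Rightarrow> bool" where
  "stochastic P \<longleftrightarrow> (\<forall>s t. P s t \<ge> 0) \<and> (\<forall>s. (\<Sum>t\<in>UNIV. P s t) = 1)"

fun nstep :: "('s::finite \<Rightarrow> 's \<Rightarrow> real) \<Rightarrow> nat \<Rightarrow> 's \<Rightarrow> 's \<Rightarrow> real" where
  "nstep P 0 s t = (if s = t then 1 else 0)"
| "nstep P (Suc n) s t = (\<Sum>u\<in>UNIV. nstep P n s u * P u t)"

definition irreducible_chain :: "('s::finite \<Rightarrow> 's \<Rightarrow> real) \<Rightarrow> bool" where
  "irreducible_chain P \<longleftrightarrow> (\<forall>s t. \<exists>n. nstep P n s t > 0)"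

definition aperiodic_chain :: "('s::finite \<Rightarrow> 's \<Rightarrow> real) \<Rightarrow> bool" where
  "aperiodic_chain P \<longleftrightarrow> (\<forall>s. Gcd {n. n > 0 \<and> nstep P n s s > 0} = (1::nat))"

definition ergodic_chain :: "('s::finite \<Rightarrow> 's \<Rightarrow> real) \<Rightarrow> bool" where
  "ergodic_chain P \<longleftrightarrow> stochastic P \<and> irreducible_chain P \<and> aperiodic_chain P"

definition stationary_distribution :: "('s::finite \<Rightarrow> 's \<Rightarrow> real) \<Rightarrow> ('s \<Rightarrow> real) \<Rightarrow> bool" where
  "stationary_distribution P \<pi> \<longleftrightarrow> (\<forall>s. \<pi> s \<ge> 0) \<and> (\<Sum>s\<in>UNIV. \<pi> s) = 1
     \<and> (\<forall>t. (\<Sum>s\<in>UNIV. \<pi> s * P s t) = \<pi> t)"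

definition diag_mat :: "('s::finite \<Rightarrow> real) \<Rightarrow> real^'s^'s" where
  "diag_mat d = (\<chi> i j. if i = j then d i else 0)"

definition ode_solution :: "('a::real_normed_vector \<Rightarrow> 'a) \<Rightarrow> (real \<Rightarrow> 'a) \<Rightarrow> bool" where
  "ode_solution f w \<longleftrightarrow> (\<forall>t\<ge>0. (w has_vector_derivative f (w t)) (at t within {0..}))"

definition equilibrium :: "('a::real_normed_vector \<Rightarrow> 'a) \<Rightarrow> 'a \<Rightarrow> bool" where
  "equilibrium f x \<longleftrightarrow> f x = 0"

definition lyapunov_stable :: "('a::real_normed_vector \<Rightarrow> 'a) \<Rightarrow> 'a \<Rightarrow> bool" where
  "lyapunov_stable f x \<longleftrightarrow> (\<forall>\<epsilon>>0. \<exists>\<delta>>0. \<forall>w. ode_solution f w \<longrightarrow> norm (w 0 - x) < \<delta>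
       \<longrightarrow> (\<forall>t\<ge>0. norm (w t - x) < \<epsilon>))"

definition globally_attractive :: "('a::real_normed_vector \<Rightarrow> 'a) \<Rightarrow> 'a \<Rightarrow> bool" where
  "globally_attractive f x \<longleftrightarrow> (\<forall>w. ode_solution f w \<longrightarrow> (w \<longlongrightarrow> x) at_top)"

definition globally_asymptotically_stable_equilibrium :: "('a::real_normed_vector \<Rightarrow> 'a) \<Rightarrow> 'a \<Rightarrow> bool" where
  "globally_asymptotically_stable_equilibrium f x \<longleftrightarrow>
     equilibrium f x \<and> lyapunov_stable f x \<and> globally_attractive f x"

definition nmc_h :: "('s::finite \<Rightarrow> real) \<Rightarrow> ('s \<Rightarrow> real^'n) \<Rightarrow> real^'s \<Rightarrow> real^'n \<Rightarrow> real^'n" where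
  "nmc_h \<pi> \<phi> V w = (\<Sum>s\<in>UNIV. (\<pi> s * ((\<phi> s \<bullet> w - V $ s) / (norm (\<phi> s))\<^sup>2)) *\<^sub>R \<phi> s)"

end

theory Submission imports Defs "HOL-Real_Asymp.Real_Asymp" begin

(* The mean field is affine: with the weights c s = \<pi> s / |\<phi> s|^2 one has h w = A w - b for
   the weighted Gram matrix A = \<Phi>^T diag c \<Phi> = \<Phi>^T N D N \<Phi> and b = \<Phi>^T N D N V.
   Irreducibility makes every \<pi> s positive, so by full column rank of \<Phi> the matrix A is
   positive definite, x \<bullet> A x \<ge> l |x|^2 with l > 0.  Hence A is invertible and w^M = A^-1 b is
   the only zero of h, and along every solution of w' = -(A w - b) the Lyapunov function
   exp(2 l t) |w t - w^M|^2 is non-increasing, i.e. |w t - w^M| \<le> exp(-l t) |w 0 - w^M|,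
   which gives stability and global attractivity at once. *)

lemma nstep_nonneg: "stochastic P \<Longrightarrow> nstep P n s t \<ge> 0"
  by (induction n arbitrary: t) (auto simp: stochastic_def intro!: sum_nonneg)

lemma stationary_distribution_nstep:
  assumes "stationary_distribution P \<pi>"
  shows "(\<Sum>s\<in>UNIV. \<pi> s * nstep P n s t) = \<pi> t"
proof (induction n arbitrary: t)
  case 0
  then show ?case by (simp add: if_distrib[of "\<lambda>c. _ * c"] cong: if_cong)
next
  case (Suc n)
  have "(\<Sum>s\<in>UNIV. \<pi> s * nstep P (Suc n) s t) = (\<Sum>s\<in>UNIV. \<Sum>u\<in>UNIV. \<pi> s * nstep P n s u * P u t)"
    by (simp add: sum_distrib_left mult.assoc)
  also have "\<dots> = (\<Sum>u\<in>UNIV. \<Sum>s\<in>UNIV. \<pi> s * nstep P n s u * P u t)"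
    by (rule sum.swap)
  also have "\<dots> = (\<Sum>u\<in>UNIV. \<pi> u * P u t)"
    by (simp add: sum_distrib_right[symmetric] Suc)
  also have "\<dots> = \<pi> t"
    using assms by (simp add: stationary_distribution_def)
  finally show ?case .
qed

lemma stationary_distribution_pos:
  fixes P :: "'s::finite \<Rightarrow> 's \<Rightarrow> real"
  assumes "stochastic P" and "irreducible_chain P" and stat: "stationary_distribution P \<pi>"
  shows "\<pi> t > 0"
proof -
  have nonneg: "\<And>s. \<pi> s \<ge> 0" and "(\<Sum>s\<in>UNIV. \<pi> s) = 1"
    using stat by (auto simp: stationary_distribution_def)
  then obtain s0 where s0: "\<pi> s0 > 0"
    by (metis less_eq_real_def sum.neutral zero_neq_one)
  obtain n where n: "nstep P n s0 t > 0"
    using assms(2) by (auto simp: irreducible_chain_def)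
  have "\<pi> s0 * nstep P n s0 t \<le> (\<Sum>s\<in>UNIV. \<pi> s * nstep P n s t)"
    by (rule member_le_sum) (auto intro!: mult_nonneg_nonneg nonneg nstep_nonneg[OF assms(1)])
  moreover have "\<pi> s0 * nstep P n s0 t > 0"
    using s0 n by simp
  ultimately show ?thesis
    using stationary_distribution_nstep[OF stat] by simp
qed

lemma diag_mat_mult_vec: "diag_mat d *v x = (\<chi> i. d i * x $ i)"
proof -
  have "(\<Sum>j\<in>UNIV. (if i = j then d i else 0) * x $ j) = d i * x $ i" for i
    by (simp add: if_distrib[of "\<lambda>c. c * _"] sum.delta cong: if_cong)
  then show ?thesis
    by (simp add: diag_mat_def matrix_vector_mult_def vec_eq_iff)
qed

lemma diag_mat_mult: "diag_mat a ** diag_mat b = diag_mat (\<lambda>i. a i * b i)"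
  by (simp add: diag_mat_def matrix_matrix_mult_def vec_eq_iff if_distrib[of "\<lambda>c. c * _"]
      sum.delta cong: if_cong)

lemma matrix_vector_mult_rows:
  assumes "\<forall>s. row s \<Phi> = \<phi> s"
  shows "\<Phi> *v w = (\<chi> s. \<phi> s \<bullet> w)"
  using assms by (simp add: matrix_vector_mult_def vec_eq_iff inner_vec_def row_def mult.commute)

lemma vector_matrix_mult_rows:
  assumes "\<forall>s. row s \<Phi> = \<phi> s"
  shows "y v* \<Phi> = (\<Sum>s\<in>UNIV. y $ s *\<^sub>R \<phi> s)"
  using assms by (simp add: vector_matrix_mult_def vec_eq_iff row_def mult.commute)

lemma weighted_gram_quadratic_form:
  fixes \<Phi> :: "real^'n^'s"
  shows "x \<bullet> ((transpose \<Phi> ** diag_mat c ** \<Phi>) *v x) = (\<Sum>s\<in>UNIV. c s * ((\<Phi> *v x) $ s)\<^sup>2)"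
proof -
  have adjoint: "x \<bullet> (transpose \<Phi> *v y) = (\<Phi> *v x) \<bullet> y" for y
    by (metis dot_lmul_matrix inner_commute transpose_matrix_vector)
  have "x \<bullet> ((transpose \<Phi> ** diag_mat c ** \<Phi>) *v x) = (\<Phi> *v x) \<bullet> (diag_mat c *v (\<Phi> *v x))"
    by (simp only: matrix_vector_mul_assoc[symmetric] adjoint)
  then show ?thesis
    by (simp add: diag_mat_mult_vec inner_vec_def power2_eq_square mult.left_commute)
qed

lemma weighted_gram_pos_def:
  fixes \<Phi> :: "real^'n^'s"
  assumes "\<And>s. c s > 0" and "inj ((*v) \<Phi>)" and "x \<noteq> 0"
  shows "0 < x \<bullet> ((transpose \<Phi> ** diag_mat c ** \<Phi>) *v x)"
proof -
  have "\<Phi> *v x \<noteq> 0"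
    using assms(2,3) by (metis injD matrix_vector_mult_0_right)
  then obtain s where s: "(\<Phi> *v x) $ s \<noteq> 0"
    by (auto simp: vec_eq_iff)
  have "0 < c s * ((\<Phi> *v x) $ s)\<^sup>2"
    using s assms(1) by simp
  also have "\<dots> \<le> (\<Sum>s\<in>UNIV. c s * ((\<Phi> *v x) $ s)\<^sup>2)"
    by (rule member_le_sum) (auto intro!: mult_nonneg_nonneg less_imp_le[OF assms(1)])
  finally show ?thesis
    by (simp add: weighted_gram_quadratic_form)
qed

lemma pos_def_quadratic_form_lower_bound:
  fixes A :: "real^'n^'n"
  assumes "\<And>x. x \<noteq> 0 \<Longrightarrow> 0 < x \<bullet> (A *v x)"
  obtains l where "l > 0" and "\<And>x. l * (norm x)\<^sup>2 \<le> x \<bullet> (A *v x)"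
proof -
  have cont: "continuous_on (sphere 0 1) (\<lambda>x. x \<bullet> (A *v x))"
    by (intro continuous_intros linear_continuous_on matrix_vector_mul_linear)
  have "sphere (0::real^'n) 1 \<noteq> {}"
    using norm_axis_1[of undefined] by (metis empty_iff mem_sphere_0)
  then obtain u0 where u0: "u0 \<in> sphere 0 1"
    and min: "\<And>u. u \<in> sphere 0 1 \<Longrightarrow> u0 \<bullet> (A *v u0) \<le> u \<bullet> (A *v u)"
    using continuous_attains_inf[OF compact_sphere _ cont] by blast
  define l where "l = u0 \<bullet> (A *v u0)"
  have "u0 \<noteq> 0"
    using u0 by auto
  then have "l > 0"
    using assms by (simp add: l_def)
  moreover have "l * (norm x)\<^sup>2 \<le> x \<bullet> (A *v x)" for x
  proof (cases "x = 0")
    case False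
    define u where "u = (1 / norm x) *\<^sub>R x"
    have x: "x = norm x *\<^sub>R u" and u: "u \<in> sphere 0 1"
      using False by (simp_all add: u_def)
    have "x \<bullet> (A *v x) = (norm x)\<^sup>2 * (u \<bullet> (A *v u))"
      by (subst (1 2) x) (simp add: matrix_vector_mult_scaleR power2_eq_square)
    moreover have "l \<le> u \<bullet> (A *v u)"
      using min[OF u] by (simp add: l_def)
    ultimately show ?thesis
      by (metis mult.commute mult_right_mono zero_le_power2)
  qed simp
  ultimately show thesis
    using that by blast
qed

lemma pos_def_invertible:
  fixes A :: "real^'n^'n"
  assumes "\<And>x. x \<noteq> 0 \<Longrightarrow> 0 < x \<bullet> (A *v x)"
  shows "invertible A"
proof -
  have "A *v x = 0 \<Longrightarrow> x = 0" for x
    using assms by force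
  then show ?thesis
    by (simp add: invertible_left_inverse matrix_left_invertible_ker)
qed

lemma matrix_inv_right: "invertible A \<Longrightarrow> A ** matrix_inv A = mat 1"
  unfolding invertible_def matrix_inv_def
  by (rule someI_ex[where P = "\<lambda>A'. A ** A' = mat 1 \<and> A' ** A = mat 1", THEN conjunct1])

lemma ode_solution_has_vector_derivative_at:
  assumes "ode_solution f w" and "t > 0"
  shows "(w has_vector_derivative f (w t)) (at t)"
proof -
  have "(w has_vector_derivative f (w t)) (at t within {0..})"
    using assms unfolding ode_solution_def by simp
  then have "(w has_vector_derivative f (w t)) (at t within {0<..})"
    by (rule has_vector_derivative_within_subset) auto
  then show ?thesis
    using assms(2) has_vector_derivative_within_open[of t "{0<..}"] by auto
qed

lemma ode_solution_continuous_on: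
  assumes "ode_solution f w"
  shows "continuous_on {0..} w"
  unfolding continuous_on_eq_continuous_within
proof
  fix t :: real
  assume "t \<in> {0..}"
  then have "(w has_vector_derivative f (w t)) (at t within {0..})"
    using assms unfolding ode_solution_def by simp
  then show "continuous (at t within {0..}) w"
    by (rule has_vector_derivative_continuous)
qed

lemma affine_ode_weighted_sq_dist_le:
  fixes A :: "real^'n^'n" and w :: "real \<Rightarrow> real^'n"
  assumes coercive: "\<And>x. l * (norm x)\<^sup>2 \<le> x \<bullet> (A *v x)"
    and sol: "ode_solution (\<lambda>x. - (A *v x - b)) w" and eq: "A *v x0 = b" and t: "t \<ge> 0"
  shows "exp (2 * l * t) * (norm (w t - x0))\<^sup>2 \<le> (norm (w 0 - x0))\<^sup>2"
proof -
  define e where "e = (\<lambda>t. w t - x0)"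
  define g where "g = (\<lambda>t. exp (2 * l * t) * (e t \<bullet> e t))"
  have "continuous_on {0..t} w"
    using ode_solution_continuous_on[OF sol] by (rule continuous_on_subset) auto
  then have cont: "continuous_on {0..t} g"
    unfolding g_def e_def by (intro continuous_intros)
  have "g t \<le> g 0"
  proof (rule DERIV_nonpos_imp_decreasing_open[OF t _ cont])
    fix s assume "0 < s" "s < t"
    then have "(w has_vector_derivative - (A *v e s)) (at s)"
      using ode_solution_has_vector_derivative_at[OF sol]
      by (simp add: e_def matrix_vector_mult_diff_distrib eq)
    then have de: "(e has_derivative (\<lambda>h. h *\<^sub>R - (A *v e s))) (at s)"
      unfolding e_def has_vector_derivative_def by (auto intro!: derivative_eq_intros)
    have "((\<lambda>t. e t \<bullet> e t) has_real_derivative - 2 * (e s \<bullet> (A *v e s))) (at s)"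
      unfolding has_field_derivative_def
      by (rule has_derivative_eq_rhs[OF has_derivative_inner[OF de de]])
        (auto simp: fun_eq_iff inner_commute algebra_simps)
    then have "(g has_real_derivative
        2 * l * exp (2 * l * s) * (e s \<bullet> e s) + exp (2 * l * s) * (- 2 * (e s \<bullet> (A *v e s)))) (at s)"
      unfolding g_def by (auto intro!: derivative_eq_intros)
    moreover have "2 * l * exp (2 * l * s) * (e s \<bullet> e s) + exp (2 * l * s) * (- 2 * (e s \<bullet> (A *v e s))) \<le> 0"
    proof -
      have "l * (e s \<bullet> e s) \<le> e s \<bullet> (A *v e s)"
        using coercive[of "e s"] by (simp add: power2_norm_eq_inner)
      then have "exp (2 * l * s) * (l * (e s \<bullet> e s)) \<le> exp (2 * l * s) * (e s \<bullet> (A *v e s))"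
        by (rule mult_left_mono) simp
      then show ?thesis
        by (simp add: algebra_simps)
    qed
    ultimately show "\<exists>y. (g has_real_derivative y) (at s) \<and> y \<le> 0"
      by blast
  qed
  then show ?thesis
    by (simp add: g_def e_def power2_norm_eq_inner)
qed

lemma affine_ode_dist_decay:
  fixes A :: "real^'n^'n" and w :: "real \<Rightarrow> real^'n"
  assumes "\<And>x. l * (norm x)\<^sup>2 \<le> x \<bullet> (A *v x)"
    and "ode_solution (\<lambda>x. - (A *v x - b)) w" and "A *v x0 = b" and "t \<ge> 0"
  shows "norm (w t - x0) \<le> exp (- (l * t)) * norm (w 0 - x0)"
proof -
  have "(exp (l * t) * norm (w t - x0))\<^sup>2 \<le> (norm (w 0 - x0))\<^sup>2"
    using affine_ode_weighted_sq_dist_le[OF assms]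
    by (simp add: power_mult_distrib mult.assoc flip: exp_double)
  then have "exp (l * t) * norm (w t - x0) \<le> norm (w 0 - x0)"
    by (rule power2_le_imp_le) simp
  then have "exp (- (l * t)) * (exp (l * t) * norm (w t - x0)) \<le> exp (- (l * t)) * norm (w 0 - x0)"
    by (rule mult_left_mono) simp
  then show ?thesis
    by (simp add: mult.assoc[symmetric] exp_minus_inverse mult.commute[of "exp (- (l * t))"])
qed

lemma affine_field_gas_iff:
  fixes A :: "real^'n^'n"
  assumes l: "l > 0" and coercive: "\<And>x. l * (norm x)\<^sup>2 \<le> x \<bullet> (A *v x)" and eq: "A *v x0 = b"
  shows "globally_asymptotically_stable_equilibrium (\<lambda>x. - (A *v x - b)) x \<longleftrightarrow> x = x0"
proof -
  let ?f = "\<lambda>x. - (A *v x - b)"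
  have decay: "norm (w t - x0) \<le> exp (- (l * t)) * norm (w 0 - x0)"
    if "ode_solution ?f w" "t \<ge> 0" for w t
    using affine_ode_dist_decay[OF coercive that(1) eq that(2)] .
  have "norm (w t - x0) \<le> norm (w 0 - x0)" if "ode_solution ?f w" "t \<ge> 0" for w t
  proof -
    have "exp (- (l * t)) \<le> 1"
      using l that(2) by (simp add: zero_le_mult_iff)
    then have "exp (- (l * t)) * norm (w 0 - x0) \<le> norm (w 0 - x0)"
      by (rule mult_left_le_one_le[OF norm_ge_zero exp_ge_zero])
    then show ?thesis
      using decay[OF that] by linarith
  qed
  then have "lyapunov_stable ?f x0"
    unfolding lyapunov_stable_def by (blast intro: le_less_trans)
  moreover have "globally_attractive ?f x0"
    unfolding globally_attractive_def
  proof (intro allI impI)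
    fix w assume sol: "ode_solution ?f w"
    have "((\<lambda>t. exp (- (l * t)) * norm (w 0 - x0)) \<longlongrightarrow> 0) at_top"
      using l by real_asymp
    moreover have "eventually (\<lambda>t. norm (w t - x0) \<le> exp (- (l * t)) * norm (w 0 - x0)) at_top"
      using decay[OF sol] by (intro eventually_at_top_linorderI[of 0])
    ultimately have "((\<lambda>t. w t - x0) \<longlongrightarrow> 0) at_top"
      by (rule Lim_null_comparison[rotated])
    then show "(w \<longlongrightarrow> x0) at_top"
      by (simp add: Lim_null[of w])
  qed
  moreover have "equilibrium ?f x0"
    by (simp add: equilibrium_def eq)
  ultimately have "globally_asymptotically_stable_equilibrium ?f x0"
    by (simp add: globally_asymptotically_stable_equilibrium_def)
  moreover have "x = x0" if "globally_asymptotically_stable_equilibrium ?f x"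
  proof -
    have "A *v (x - x0) = 0"
      using that by (simp add: globally_asymptotically_stable_equilibrium_def equilibrium_def
          matrix_vector_mult_diff_distrib eq)
    then have "l * (norm (x - x0))\<^sup>2 \<le> 0"
      using coercive[of "x - x0"] by simp
    then show "x = x0"
      using l by (auto simp: mult_le_0_iff)
  qed
  ultimately show ?thesis
    by blast
qed

lemma nmc_h_weighted_gram:
  assumes "\<forall>s. row s \<Phi> = \<phi> s"
  shows "nmc_h \<pi> \<phi> V w = (transpose \<Phi> ** diag_mat (\<lambda>s. \<pi> s / (norm (\<phi> s))\<^sup>2) ** \<Phi>) *v w
      - (transpose \<Phi> ** diag_mat (\<lambda>s. \<pi> s / (norm (\<phi> s))\<^sup>2)) *v V"
  by (simp add: nmc_h_def matrix_vector_mult_rows[OF assms] matrix_vector_mul_assoc[symmetric]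
      vector_matrix_mult_rows[OF assms] diag_mat_mult_vec sum_subtractf[symmetric]
      diff_divide_distrib algebra_simps)

lemma weighted_gram_gas_iff:
  fixes \<Phi> :: "real^'n^'s"
  assumes "\<And>s. c s > 0" and "inj ((*v) \<Phi>)"
  defines "A \<equiv> transpose \<Phi> ** diag_mat c ** \<Phi>" and "B \<equiv> transpose \<Phi> ** diag_mat c"
  shows "globally_asymptotically_stable_equilibrium (\<lambda>x. - (A *v x - B *v V)) x
    \<longleftrightarrow> x = (matrix_inv A ** B) *v V"
proof -
  have pos_def: "\<And>x. x \<noteq> 0 \<Longrightarrow> 0 < x \<bullet> (A *v x)"
    unfolding A_def using assms(1,2) by (rule weighted_gram_pos_def)
  obtain l where "l > 0" and coercive: "\<And>x. l * (norm x)\<^sup>2 \<le> x \<bullet> (A *v x)"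
    using pos_def_quadratic_form_lower_bound[OF pos_def] by blast
  have "A ** matrix_inv A = mat 1"
    by (rule matrix_inv_right[OF pos_def_invertible[OF pos_def]])
  then have "A *v ((matrix_inv A ** B) *v V) = B *v V"
    by (simp add: matrix_vector_mul_assoc matrix_mul_assoc)
  then show ?thesis
    by (rule affine_field_gas_iff[OF \<open>l > 0\<close> coercive])
qed

theorem proposition5:
  fixes P :: "'s::finite \<Rightarrow> 's \<Rightarrow> real"
    and \<pi> :: "'s \<Rightarrow> real"
    and \<phi> :: "'s \<Rightarrow> real^'n::finite"
    and V :: "real^'s"
    and \<Phi> :: "real^'n^'s"
  assumes ergodic: "ergodic_chain P"
    and stat: "stationary_distribution P \<pi>"
    and feat_nz: "\<forall>s. \<phi> s \<noteq> 0"
    and Phi_rows: "\<forall>s. row s \<Phi> = \<phi> s"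
    and full_rank: "rank \<Phi> = CARD('n)"
  shows "let N = diag_mat (\<lambda>s. 1 / norm (\<phi> s));
             D = diag_mat \<pi>;
             wM = (matrix_inv (transpose \<Phi> ** N ** D ** N ** \<Phi>) ** transpose \<Phi> ** N ** D ** N) *v V;
             f = (\<lambda>w. - nmc_h \<pi> \<phi> V w)
         in globally_asymptotically_stable_equilibrium f wM
            \<and> (\<forall>x. globally_asymptotically_stable_equilibrium f x \<longrightarrow> x = wM)"
proof -
  define N where "N = diag_mat (\<lambda>s. 1 / norm (\<phi> s))"
  define D where "D = diag_mat \<pi>"
  define c where "c s = \<pi> s / (norm (\<phi> s))\<^sup>2" for s
  have NDN: "N ** D ** N = diag_mat c"
    unfolding N_def D_def diag_mat_mult
    by (rule arg_cong[where f = diag_mat]) (simp add: fun_eq_iff c_def power2_eq_square)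
  have c_pos: "c s > 0" for s
    using stationary_distribution_pos[OF _ _ stat] ergodic feat_nz
    by (simp add: c_def ergodic_chain_def)
  have inj: "inj ((*v) \<Phi>)"
    using full_rank by (simp add: full_rank_injective)
  have f: "(\<lambda>w. - nmc_h \<pi> \<phi> V w)
      = (\<lambda>x. - ((transpose \<Phi> ** diag_mat c ** \<Phi>) *v x - (transpose \<Phi> ** diag_mat c) *v V))"
    unfolding nmc_h_weighted_gram[OF Phi_rows] c_def[symmetric] ..
  have wM: "matrix_inv (transpose \<Phi> ** N ** D ** N ** \<Phi>) ** transpose \<Phi> ** N ** D ** N
      = matrix_inv (transpose \<Phi> ** diag_mat c ** \<Phi>) ** (transpose \<Phi> ** diag_mat c)"
    by (simp add: NDN[symmetric] matrix_mul_assoc[symmetric])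
  show ?thesis
    unfolding Let_def N_def[symmetric] D_def[symmetric] f wM weighted_gram_gas_iff[OF c_pos inj]
    by simp
qed

end
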